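(* Let $n\ge3$ and let $\sigma$ be a Riemannian metric on the complement of a ball in $\mathbb{R}^n$ which is asymptotically flat. There exists $r_1>0$, depending only on $\sigma$, such that for every $r_0\ge r_1$ there exists a rotationally symmetric function $b\colon\mathbb{R}^n\setminus B_{r_0}(0)\to\mathbb{R}$ with (i) $b(x)\simeq r_0^{\,n-\frac32}\,|x|^{-(n-\frac52)}$, and (ii) $g^{ij}(\sigma,\nabla b)\,{}^\sigma\nabla^2_{ij}b\le 0$, i.e. $b$ is a static supersolution.
   Context: Asymptotic flatness of $\sigma$ means: there is a bounded function $\omega$ with $\omega(r)\to0$ as $r\to\infty$ such that $|\sigma_{ij}-\delta_{ij}|\lesssim\omega(r)$ and $|\partial\sigma_{ij}|\lesssim\omega(r)/r$ for $r=|x|$ large (Euclidean norms and partial derivatives). For a function $w$ with $|\nabla w|_\sigma<1$, $g^{ij}(\sigma,\nabla w)=\sigma^{ij}+\frac{\sigma^{ik}\sigma^{jl}w_kw_l}{1-\sigma^{kl}w_kw_l}$ and ${}^\sigma\nabla^2_{ij}w=w_{ij}-\Gamma^k_{ij}w_k$ with $\Gamma$ the Christoffel symbols of $\sigma$. The notation $x\lesssim y$ means $x\le Cy$ for a constant $C=C(n)>0$, and $x\simeq y$ means $x\lesssim y$ and $y\lesssim x$. *)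

theory Defs
  imports "HOL-Analysis.Analysis"
begin

definition partial :: "'n::finite \<Rightarrow> (real^'n \<Rightarrow> real) \<Rightarrow> real^'n \<Rightarrow> real" where
  "partial k f x = deriv (\<lambda>t. f (x + t *\<^sub>R axis k 1)) 0"

fun iter_partial :: "'n::finite list \<Rightarrow> (real^'n \<Rightarrow> real) \<Rightarrow> real^'n \<Rightarrow> real" where
  "iter_partial [] f = f"
| "iter_partial (k # ks) f = partial k (iter_partial ks f)"

definition smooth_on :: "(real^'n::finite) set \<Rightarrow> (real^'n \<Rightarrow> real) \<Rightarrow> bool" where
  "smooth_on S f \<longleftrightarrow> (\<forall>ks. iter_partial ks f differentiable_on S)"

definition twice_diff_on :: "(real^'n::finite) set \<Rightarrow> (real^'n \<Rightarrow> real) \<Rightarrow> bool" where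
  "twice_diff_on S f \<longleftrightarrow> f differentiable_on S \<and> (\<forall>k. partial k f differentiable_on S)"

definition riemannian_exterior :: "(real^'n::finite \<Rightarrow> real^'n^'n) \<Rightarrow> real \<Rightarrow> bool" where
  "riemannian_exterior \<sigma> R0 \<longleftrightarrow>
     (\<forall>i j. smooth_on {x. R0 < norm x} (\<lambda>x. \<sigma> x $ i $ j)) \<and>
     (\<forall>x. R0 < norm x \<longrightarrow> transpose (\<sigma> x) = \<sigma> x \<and>
        (\<forall>v. v \<noteq> 0 \<longrightarrow> v \<bullet> (\<sigma> x *v v) > 0))"

definition asymp_flat :: "(real^'n::finite \<Rightarrow> real^'n^'n) \<Rightarrow> bool" where
  "asymp_flat \<sigma> \<longleftrightarrow>
     (\<exists>\<omega> :: real \<Rightarrow> real. (\<exists>M. \<forall>r. \<bar>\<omega> r\<bar> \<le> M) \<and> (\<omega> \<longlongrightarrow> 0) at_top \<and>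
       (\<exists>R. \<forall>x. R \<le> norm x \<longrightarrow>
          (\<forall>i j. \<bar>\<sigma> x $ i $ j - (if i = j then 1 else 0)\<bar> \<le> \<omega> (norm x) \<and>
                 (\<forall>k. \<bar>partial k (\<lambda>y. \<sigma> y $ i $ j) x\<bar> \<le> \<omega> (norm x) / norm x))))"

definition inv_metric :: "(real^'n::finite \<Rightarrow> real^'n^'n) \<Rightarrow> real^'n \<Rightarrow> 'n \<Rightarrow> 'n \<Rightarrow> real" where
  "inv_metric \<sigma> x i j = matrix_inv (\<sigma> x) $ i $ j"

definition christoffel :: "(real^'n::finite \<Rightarrow> real^'n^'n) \<Rightarrow> real^'n \<Rightarrow> 'n \<Rightarrow> 'n \<Rightarrow> 'n \<Rightarrow> real" where
  "christoffel \<sigma> x k i j = (1/2) * (\<Sum>l\<in>UNIV. inv_metric \<sigma> x k l *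
      (partial i (\<lambda>y. \<sigma> y $ j $ l) x + partial j (\<lambda>y. \<sigma> y $ i $ l) x
       - partial l (\<lambda>y. \<sigma> y $ i $ j) x))"

definition grad_norm2 :: "(real^'n::finite \<Rightarrow> real^'n^'n) \<Rightarrow> (real^'n \<Rightarrow> real) \<Rightarrow> real^'n \<Rightarrow> real" where
  "grad_norm2 \<sigma> w x = (\<Sum>k\<in>UNIV. \<Sum>l\<in>UNIV. inv_metric \<sigma> x k l * partial k w x * partial l w x)"

definition g_inv :: "(real^'n::finite \<Rightarrow> real^'n^'n) \<Rightarrow> (real^'n \<Rightarrow> real) \<Rightarrow> real^'n \<Rightarrow> 'n \<Rightarrow> 'n \<Rightarrow> real" where
  "g_inv \<sigma> w x i j = inv_metric \<sigma> x i j +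
     (\<Sum>k\<in>UNIV. \<Sum>l\<in>UNIV. inv_metric \<sigma> x i k * inv_metric \<sigma> x j l * partial k w x * partial l w x)
     / (1 - grad_norm2 \<sigma> w x)"

definition cov_hess :: "(real^'n::finite \<Rightarrow> real^'n^'n) \<Rightarrow> (real^'n \<Rightarrow> real) \<Rightarrow> real^'n \<Rightarrow> 'n \<Rightarrow> 'n \<Rightarrow> real" where
  "cov_hess \<sigma> w x i j = partial i (partial j w) x - (\<Sum>k\<in>UNIV. christoffel \<sigma> x k i j * partial k w x)"

definition static_op :: "(real^'n::finite \<Rightarrow> real^'n^'n) \<Rightarrow> (real^'n \<Rightarrow> real) \<Rightarrow> real^'n \<Rightarrow> real" where
  "static_op \<sigma> w x = (\<Sum>i\<in>UNIV. \<Sum>j\<in>UNIV. g_inv \<sigma> w x i j * cov_hess \<sigma> w x i j)"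

end

theory Submission
  imports Defs
begin

(*
  The barrier is b = c |x|^(-p) with p = n - 5/2. Its Euclidean Hessian is
  h ((p + 2) x x^T / |x|^2 - I) with h = p c |x|^(-p-2) > 0, whose trace is
  h (p + 2 - n) = -h/2: the flat static operator applied to b is negative with a
  margin proportional to h. Asymptotic flatness makes sigma, its inverse and its
  Christoffel symbols (of size omega / |x|) small perturbations of the flat data beyond
  some radius r1, and the normalisation c = r0^(n - 3/2) / C keeps |grad b| <= p / C on
  |x| >= r0, so the quasilinear correction in g^{ij} is small as well. Every error term
  is then h times a small quantity and is absorbed by the margin -h/2.
*)

lemma abs_mult_le_mult:
  fixes u v :: real
  assumes "\<bar>u\<bar> \<le> A" "\<bar>v\<bar> \<le> B"
  shows "\<bar>u * v\<bar> \<le> A * B"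
  unfolding abs_mult using assms by (intro mult_mono) auto

lemma abs_sum_le_card_mult:
  fixes f :: "'n::finite \<Rightarrow> real"
  assumes "\<And>i. \<bar>f i\<bar> \<le> B"
  shows "\<bar>\<Sum>i\<in>UNIV. f i\<bar> \<le> real CARD('n) * B"
proof -
  have "\<bar>\<Sum>i\<in>UNIV. f i\<bar> \<le> (\<Sum>i\<in>UNIV. \<bar>f i\<bar>)" by (rule sum_abs)
  also have "\<dots> \<le> real CARD('n) * B" using sum_bounded_above[of UNIV "\<lambda>i. \<bar>f i\<bar>" B] assms by simp
  finally show ?thesis .
qed

lemma abs_bilinear_form_le:
  fixes A :: "'n::finite \<Rightarrow> 'n \<Rightarrow> real" and u v :: "'n \<Rightarrow> real"
  assumes "\<And>k l. \<bar>A k l\<bar> \<le> M" "\<And>k. \<bar>u k\<bar> \<le> a" "\<And>l. \<bar>v l\<bar> \<le> b"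
  shows "\<bar>\<Sum>k\<in>UNIV. \<Sum>l\<in>UNIV. A k l * u k * v l\<bar> \<le> real CARD('n)^2 * (M * a * b)"
proof -
  have "\<bar>\<Sum>k\<in>UNIV. \<Sum>l\<in>UNIV. A k l * u k * v l\<bar> \<le> real CARD('n) * (real CARD('n) * (M * a * b))"
    by (intro abs_sum_le_card_mult abs_mult_le_mult assms)
  then show ?thesis by (simp add: power2_eq_square mult.assoc)
qed

lemma abs_le_sqrt_sum_squares:
  fixes x :: "'n::finite \<Rightarrow> real"
  shows "\<bar>x k\<bar> \<le> sqrt (\<Sum>l\<in>UNIV. x l ^ 2)"
  using member_le_sum[of k UNIV "\<lambda>l. x l ^ 2"] real_sqrt_le_mono by fastforce

lemma sum_mult_perturbed_le:
  fixes G H K :: "'n::finite \<Rightarrow> 'n \<Rightarrow> real"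
  assumes G: "\<And>i j. \<bar>G i j - (if i = j then 1 else 0)\<bar> \<le> \<eta>" and "\<eta> \<le> 1"
    and H: "\<And>i j. \<bar>H i j\<bar> \<le> B" and K: "\<And>i j. \<bar>K i j\<bar> \<le> \<kappa>"
  shows "(\<Sum>i\<in>UNIV. \<Sum>j\<in>UNIV. G i j * (H i j - K i j))
    \<le> (\<Sum>i\<in>UNIV. H i i) + real CARD('n)^2 * (\<eta> * B + 2 * \<kappa>)"
proof -
  define \<delta> :: "'n \<Rightarrow> 'n \<Rightarrow> real" where "\<delta> i j = (if i = j then 1 else 0)" for i j
  have G2: "\<bar>G i j\<bar> \<le> 2" for i j
    using G[of i j] \<open>\<eta> \<le> 1\<close> by (auto split: if_splits)
  have "(\<Sum>i\<in>UNIV. \<Sum>j\<in>UNIV. G i j * (H i j - K i j))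
      = (\<Sum>i\<in>UNIV. \<Sum>j\<in>UNIV. \<delta> i j * H i j)
        + (\<Sum>i\<in>UNIV. \<Sum>j\<in>UNIV. (G i j - \<delta> i j) * H i j - G i j * K i j)"
    by (simp add: sum.distrib[symmetric] algebra_simps)
  also have "(\<Sum>i\<in>UNIV. \<Sum>j\<in>UNIV. \<delta> i j * H i j) = (\<Sum>i\<in>UNIV. H i i)"
  proof -
    have "\<delta> i j * H i j = (if i = j then H i j else 0)" for i j by (simp add: \<delta>_def)
    then show ?thesis by simp
  qed
  also have "(\<Sum>i\<in>UNIV. \<Sum>j\<in>UNIV. (G i j - \<delta> i j) * H i j - G i j * K i j)
      \<le> real CARD('n) * (real CARD('n) * (\<eta> * B + 2 * \<kappa>))"
  proof -
    have "\<bar>(G i j - \<delta> i j) * H i j - G i j * K i j\<bar> \<le> \<eta> * B + 2 * \<kappa>" for i j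
      using abs_mult_le_mult[OF G[of i j] H[of i j]] abs_mult_le_mult[OF G2[of i j] K[of i j]]
      unfolding \<delta>_def by linarith
    then show ?thesis
      by (intro abs_sum_le_card_mult abs_le_D1[OF abs_sum_le_card_mult])
  qed
  finally show ?thesis by (simp add: power2_eq_square mult.assoc)
qed

lemma radial_model_hessian:
  fixes x :: "'n::finite \<Rightarrow> real" and H :: "'n \<Rightarrow> 'n \<Rightarrow> real"
  assumes s: "s = (\<Sum>k\<in>UNIV. x k ^ 2)" "s > 0" and "h \<ge> 0" "\<mu> \<ge> 0"
    and H: "\<And>i j. H i j = h * (\<mu> * x i * x j / s - (if i = j then 1 else 0))"
  shows "(\<Sum>i\<in>UNIV. H i i) = h * (\<mu> - real CARD('n))"
    and "\<bar>H i j\<bar> \<le> h * (\<mu> + 1)"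
proof -
  have "(\<Sum>i\<in>UNIV. H i i) = h * \<mu> / s * (\<Sum>i\<in>UNIV. x i ^ 2) - (\<Sum>i\<in>(UNIV::'n set). h)"
    by (simp add: H sum_subtractf sum_distrib_left power2_eq_square algebra_simps)
  then show "(\<Sum>i\<in>UNIV. H i i) = h * (\<mu> - real CARD('n))"
    using s by (simp add: algebra_simps)
  have "\<bar>x i * x j\<bar> \<le> sqrt s * sqrt s"
    unfolding s(1) by (intro abs_mult_le_mult abs_le_sqrt_sum_squares)
  then have "\<bar>x i * x j / s\<bar> \<le> 1"
    using s(2) by (simp add: abs_div)
  then have "\<bar>\<mu> * (x i * x j / s)\<bar> \<le> \<mu>"
    using abs_mult_le_mult[of \<mu> \<mu> "x i * x j / s" 1] \<open>\<mu> \<ge> 0\<close> by simp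
  then have "\<bar>\<mu> * x i * x j / s\<bar> \<le> \<mu>"
    by (metis mult.assoc times_divide_eq_right)
  then have "\<bar>\<mu> * x i * x j / s - (if i = j then 1 else 0)\<bar> \<le> \<mu> + 1"
    by (smt (verit))
  then show "\<bar>H i j\<bar> \<le> h * (\<mu> + 1)"
    unfolding H abs_mult using \<open>h \<ge> 0\<close> by (simp add: mult_left_mono)
qed

lemma quasilinear_coefficients_near_delta:
  fixes S :: "'n::finite \<Rightarrow> 'n \<Rightarrow> real" and g :: "'n \<Rightarrow> real"
  defines "N \<equiv> real CARD('n)"
    and "Q \<equiv> \<Sum>k\<in>UNIV. \<Sum>l\<in>UNIV. S k l * g k * g l"
  assumes S: "\<And>i j. \<bar>S i j - (if i = j then 1 else 0)\<bar> \<le> e"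
    and g: "\<And>k. \<bar>g k\<bar> \<le> a" and small: "e + 8 * N^2 * a^2 \<le> 1"
  shows "Q \<le> 1/2"
    and "\<bar>S i j + (\<Sum>k\<in>UNIV. \<Sum>l\<in>UNIV. S i k * S j l * g k * g l) / (1 - Q)
           - (if i = j then 1 else 0)\<bar> \<le> e + 8 * N^2 * a^2"
proof -
  have "e \<ge> 0" using S[of i i] by simp
  moreover have "8 * N^2 * a^2 \<ge> 0" by simp
  ultimately have Na: "N^2 * a^2 \<le> 1/8" and "e \<le> 1"
    using small by linarith+
  have S2: "\<bar>S i j\<bar> \<le> 2" for i j
    using S[of i j] \<open>e \<le> 1\<close> by (auto split: if_splits)
  have "\<bar>Q\<bar> \<le> N^2 * (2 * a * a)"
    unfolding Q_def N_def by (intro abs_bilinear_form_le S2 g)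
  then show Q: "Q \<le> 1/2" using Na by (simp add: power2_eq_square)
  define T where "T = (\<Sum>k\<in>UNIV. \<Sum>l\<in>UNIV. S i k * S j l * g k * g l)"
  have "\<bar>S i k * S j l\<bar> \<le> 2 * 2" for k l by (intro abs_mult_le_mult S2)
  then have "\<bar>T\<bar> \<le> N^2 * (4 * a * a)"
    unfolding T_def N_def using abs_bilinear_form_le[of "\<lambda>k l. S i k * S j l" 4 g a g a] g by simp
  moreover have "\<bar>T / (1 - Q)\<bar> \<le> 2 * \<bar>T\<bar>"
    using Q mult_left_mono[of 1 "2 * (1 - Q)" "\<bar>T\<bar>"] by (simp add: abs_div divide_le_eq algebra_simps)
  ultimately have "\<bar>T / (1 - Q)\<bar> \<le> 8 * N^2 * a^2" by (simp add: power2_eq_square)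
  then show "\<bar>S i j + T / (1 - Q) - (if i = j then 1 else 0)\<bar> \<le> e + 8 * N^2 * a^2"
    using S[of i j] by linarith
qed

(* S and \<Gamma> play the roles of the inverse metric and the Christoffel symbols at a point;
   g and H are the gradient and Hessian of a radial power c |x|^(-2q), with \<mu> = 2q + 2. *)
lemma radial_quasilinear_le:
  fixes S :: "'n::finite \<Rightarrow> 'n \<Rightarrow> real" and \<Gamma> :: "'n \<Rightarrow> 'n \<Rightarrow> 'n \<Rightarrow> real"
    and x g :: "'n \<Rightarrow> real" and H :: "'n \<Rightarrow> 'n \<Rightarrow> real"
  defines "N \<equiv> real CARD('n)"
  assumes s: "s = (\<Sum>k\<in>UNIV. x k ^ 2)" "s > 0" and h: "h > 0" and "\<mu> \<ge> 0"
    and g: "\<And>k. g k = - h * x k"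
    and H: "\<And>i j. H i j = h * (\<mu> * x i * x j / s - (if i = j then 1 else 0))"
    and S: "\<And>i j. \<bar>S i j - (if i = j then 1 else 0)\<bar> \<le> e"
    and \<Gamma>: "\<And>k i j. \<bar>\<Gamma> k i j\<bar> \<le> \<gamma>"
    and small: "e + 8 * N^2 * (h^2 * s) \<le> 1"
  shows "(\<Sum>k\<in>UNIV. \<Sum>l\<in>UNIV. S k l * g k * g l) < 1 \<and>
    (\<Sum>i\<in>UNIV. \<Sum>j\<in>UNIV. (S i j + (\<Sum>k\<in>UNIV. \<Sum>l\<in>UNIV. S i k * S j l * g k * g l)
        / (1 - (\<Sum>k\<in>UNIV. \<Sum>l\<in>UNIV. S k l * g k * g l)))
      * (H i j - (\<Sum>k\<in>UNIV. \<Gamma> k i j * g k)))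
    \<le> h * (\<mu> - N + N^2 * ((\<mu> + 1) * (e + 8 * N^2 * (h^2 * s)) + 2 * N * \<gamma> * sqrt s))"
proof -
  define a where "a = h * sqrt s"
  have a2: "a^2 = h^2 * s"
    using s(2) by (simp add: a_def power_mult_distrib)
  have ga: "\<bar>g k\<bar> \<le> a" for k
    using abs_le_sqrt_sum_squares[of x k] h
    by (simp add: g a_def s(1) abs_mult mult_left_mono)
  note coeffs = quasilinear_coefficients_near_delta[where S = S and g = g and a = a, OF S ga small[folded a2, unfolded N_def],
      folded N_def, unfolded a2]
  define \<eta> where "\<eta> = e + 8 * N^2 * (h^2 * s)"
  have "(\<Sum>i\<in>UNIV. \<Sum>j\<in>UNIV. (S i j + (\<Sum>k\<in>UNIV. \<Sum>l\<in>UNIV. S i k * S j l * g k * g l)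
        / (1 - (\<Sum>k\<in>UNIV. \<Sum>l\<in>UNIV. S k l * g k * g l)))
      * (H i j - (\<Sum>k\<in>UNIV. \<Gamma> k i j * g k)))
      \<le> (\<Sum>i\<in>UNIV. H i i) + N^2 * (\<eta> * (h * (\<mu> + 1)) + 2 * (N * (\<gamma> * a)))"
    unfolding N_def
  proof (rule sum_mult_perturbed_le)
    show "\<bar>S i j + (\<Sum>k\<in>UNIV. \<Sum>l\<in>UNIV. S i k * S j l * g k * g l)
        / (1 - (\<Sum>k\<in>UNIV. \<Sum>l\<in>UNIV. S k l * g k * g l)) - (if i = j then 1 else 0)\<bar> \<le> \<eta>" for i j
      using coeffs(2) unfolding \<eta>_def N_def .
    show "\<eta> \<le> 1" using small by (simp add: \<eta>_def)
    show "\<bar>H i j\<bar> \<le> h * (\<mu> + 1)" for i j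
      using radial_model_hessian(2)[OF s _ \<open>\<mu> \<ge> 0\<close> H] h by simp
    show "\<bar>\<Sum>k\<in>UNIV. \<Gamma> k i j * g k\<bar> \<le> real CARD('n) * (\<gamma> * a)" for i j
      by (intro abs_sum_le_card_mult abs_mult_le_mult \<Gamma> ga)
  qed
  also have "\<dots> = h * (\<mu> - N + N^2 * ((\<mu> + 1) * \<eta> + 2 * N * \<gamma> * sqrt s))"
  proof -
    have "(\<Sum>i\<in>UNIV. H i i) = h * (\<mu> - N)"
      unfolding N_def using radial_model_hessian(1)[OF s _ \<open>\<mu> \<ge> 0\<close> H] h by simp
    then show ?thesis by (simp add: a_def algebra_simps)
  qed
  finally show ?thesis
    using coeffs(1) unfolding \<eta>_def by simp
qed

lemma matrix_mul_matrix_inv: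
  fixes M :: "real^'n^'n"
  assumes "invertible M"
  shows "M ** matrix_inv M = mat 1"
  using assms unfolding invertible_def matrix_inv_def by (rule someI2_ex) blast

lemma positive_definite_invertible:
  fixes A :: "real^'n^'n"
  assumes "\<forall>v. v \<noteq> 0 \<longrightarrow> v \<bullet> (A *v v) > 0"
  shows "invertible A"
proof -
  have "\<forall>v. A *v v = 0 \<longrightarrow> v = 0" using assms by force
  then show ?thesis unfolding invertible_left_inverse matrix_left_invertible_ker .
qed

lemma matrix_inv_near_identity:
  fixes M :: "real^'n^'n"
  assumes "invertible M" and M: "\<And>i j. \<bar>M $ i $ j - (if i = j then 1 else 0)\<bar> \<le> w"
    and small: "2 * real CARD('n) * w \<le> 1"
  shows "\<bar>matrix_inv M $ i $ j - (if i = j then 1 else 0)\<bar> \<le> 2 * real CARD('n) * w"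
proof -
  define A where "A = matrix_inv M"
  define N where "N = real CARD('n)"
  have "w \<ge> 0" using M[of i j] by simp
  \<comment> \<open>From M A = 1: A - 1 = -(M - 1) A, so the largest entry m of A satisfies m \<le> 1 + N w m.\<close>
  have A_eq: "A $ i $ j = (if i = j then 1 else 0) - (\<Sum>k\<in>UNIV. (M $ i $ k - (if i = k then 1 else 0)) * A $ k $ j)"
    for i j
  proof -
    have "(\<Sum>k\<in>UNIV. M $ i $ k * A $ k $ j) = (if i = j then 1 else 0)"
      using matrix_mul_matrix_inv[OF \<open>invertible M\<close>]
      by (auto simp: A_def matrix_matrix_mult_def mat_def vec_eq_iff)
    moreover have "(M $ i $ k - (if i = k then 1 else 0)) * A $ k $ j
        = M $ i $ k * A $ k $ j - (if i = k then A $ k $ j else 0)" for k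
      by (simp add: algebra_simps)
    ultimately show ?thesis by (simp add: sum_subtractf)
  qed
  define m where "m = Max ((\<lambda>(i, j). \<bar>A $ i $ j\<bar>) ` UNIV)"
  have A_le_m: "\<bar>A $ i $ j\<bar> \<le> m" for i j
    unfolding m_def by (rule Max_ge) auto
  have "m \<in> (\<lambda>(i, j). \<bar>A $ i $ j\<bar>) ` UNIV"
    unfolding m_def by (rule Max_in) auto
  then obtain i0 j0 where m: "m = \<bar>A $ i0 $ j0\<bar>" by auto
  have err: "\<bar>\<Sum>k\<in>UNIV. (M $ i $ k - (if i = k then 1 else 0)) * A $ k $ j\<bar> \<le> N * (w * m)" for i j
    unfolding N_def by (intro abs_sum_le_card_mult abs_mult_le_mult M A_le_m)
  have "m \<le> 1 + N * (w * m)"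
    using A_eq[of i0 j0] err[of i0 j0] m by (auto split: if_splits)
  moreover have "N * (w * m) \<le> m / 2"
    using small mult_right_mono[of "N * w" "1/2" m] m unfolding N_def by (simp add: mult.assoc)
  ultimately have "m \<le> 2" by simp
  have "\<bar>A $ i $ j - (if i = j then 1 else 0)\<bar> \<le> N * (w * m)"
    using A_eq[of i j] err[of i j] by simp
  also have "\<dots> \<le> N * (w * 2)"
    using \<open>m \<le> 2\<close> \<open>w \<ge> 0\<close> unfolding N_def by (intro mult_left_mono) auto
  finally show ?thesis unfolding A_def N_def by simp
qed

definition near_euclidean :: "(real^'n::finite \<Rightarrow> real^'n^'n) \<Rightarrow> real \<Rightarrow> real^'n \<Rightarrow> bool" where
  "near_euclidean \<sigma> w x \<longleftrightarrow> invertible (\<sigma> x) \<and>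
     (\<forall>i j. \<bar>\<sigma> x $ i $ j - (if i = j then 1 else 0)\<bar> \<le> w) \<and>
     (\<forall>i j k. \<bar>partial k (\<lambda>y. \<sigma> y $ i $ j) x\<bar> \<le> w / norm x)"

lemma asymp_flat_near_euclidean:
  assumes "riemannian_exterior \<sigma> R0" "asymp_flat \<sigma>" "w > 0"
  shows "\<exists>r1\<ge>1. \<forall>x. r1 \<le> norm x \<longrightarrow> near_euclidean \<sigma> w x"
proof -
  from \<open>asymp_flat \<sigma>\<close> obtain \<omega> :: "real \<Rightarrow> real" and R where
    "(\<omega> \<longlongrightarrow> 0) at_top" and
    flat: "\<And>x i j k. R \<le> norm x \<Longrightarrow> \<bar>\<sigma> x $ i $ j - (if i = j then 1 else 0)\<bar> \<le> \<omega> (norm x) \<and>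
                 \<bar>partial k (\<lambda>y. \<sigma> y $ i $ j) x\<bar> \<le> \<omega> (norm x) / norm x"
    unfolding asymp_flat_def by blast
  then obtain R\<omega> where R\<omega>: "\<And>r. r \<ge> R\<omega> \<Longrightarrow> \<omega> r < w"
    using order_tendstoD(2)[of \<omega> 0 at_top w] \<open>w > 0\<close> unfolding eventually_at_top_linorder by blast
  define r1 where "r1 = max 1 (max (R0 + 1) (max R R\<omega>))"
  have "near_euclidean \<sigma> w x" if "r1 \<le> norm x" for x
  proof -
    have "R0 < norm x" "R \<le> norm x" "\<omega> (norm x) < w" "norm x > 0"
      using that R\<omega>[of "norm x"] by (auto simp: r1_def)
    moreover have "invertible (\<sigma> x)"
      using assms(1) \<open>R0 < norm x\<close> positive_definite_invertible
      unfolding riemannian_exterior_def by blast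
    moreover have "\<omega> (norm x) / norm x \<le> w / norm x"
      using \<open>\<omega> (norm x) < w\<close> \<open>norm x > 0\<close> by (simp add: divide_right_mono)
    ultimately show ?thesis
      using flat[of x] unfolding near_euclidean_def by (meson less_imp_le order.trans)
  qed
  then show ?thesis by (intro exI[of _ r1]) (auto simp: r1_def)
qed

lemma near_euclidean_inv_metric:
  fixes \<sigma> :: "real^'n::finite \<Rightarrow> real^'n^'n"
  assumes "near_euclidean \<sigma> w x" "2 * real CARD('n) * w \<le> 1"
  shows "\<bar>inv_metric \<sigma> x i j - (if i = j then 1 else 0)\<bar> \<le> 2 * real CARD('n) * w"
  unfolding inv_metric_def
  by (rule matrix_inv_near_identity) (use assms in \<open>auto simp: near_euclidean_def\<close>)

lemma near_euclidean_christoffel: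
  fixes \<sigma> :: "real^'n::finite \<Rightarrow> real^'n^'n"
  assumes "near_euclidean \<sigma> w x" "2 * real CARD('n) * w \<le> 1"
  shows "\<bar>christoffel \<sigma> x k i j\<bar> \<le> 3 * real CARD('n) * w / norm x"
proof -
  have inv: "\<bar>inv_metric \<sigma> x k l\<bar> \<le> 2" for l
    using near_euclidean_inv_metric[OF assms, of k l] assms(2) by (auto split: if_splits)
  have "\<bar>partial i (\<lambda>y. \<sigma> y $ j $ l) x + partial j (\<lambda>y. \<sigma> y $ i $ l) x
         - partial l (\<lambda>y. \<sigma> y $ i $ j) x\<bar> \<le> 3 * (w / norm x)" for l
  proof -
    have "\<bar>partial k' (\<lambda>y. \<sigma> y $ i' $ j') x\<bar> \<le> w / norm x" for i' j' k'
      using assms(1) unfolding near_euclidean_def by blast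
    from this[of i j l] this[of j i l] this[of l i j] show ?thesis by linarith
  qed
  then have "\<bar>\<Sum>l\<in>UNIV. inv_metric \<sigma> x k l *
      (partial i (\<lambda>y. \<sigma> y $ j $ l) x + partial j (\<lambda>y. \<sigma> y $ i $ l) x
       - partial l (\<lambda>y. \<sigma> y $ i $ j) x)\<bar> \<le> real CARD('n) * (2 * (3 * (w / norm x)))"
    by (intro abs_sum_le_card_mult abs_mult_le_mult inv)
  then show ?thesis unfolding christoffel_def by (simp add: abs_mult mult_ac)
qed

lemma partial_eq_frechet_derivative:
  assumes "(f has_derivative f') (at x)"
  shows "partial k f x = f' (axis k 1)"
proof -
  have line: "((\<lambda>t::real. x + t *\<^sub>R axis k 1) has_derivative (\<lambda>t. t *\<^sub>R axis k 1)) (at 0)"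
    by (auto intro!: derivative_eq_intros)
  have "linear f'" using assms has_derivative_linear by blast
  then have "(\<lambda>t. f' (t *\<^sub>R axis k 1)) = (*) (f' (axis k 1))"
    by (auto simp: linear_scale mult.commute)
  moreover have "((\<lambda>t. f (x + t *\<^sub>R axis k 1)) has_derivative (\<lambda>t. f' (t *\<^sub>R axis k 1))) (at 0)"
    using has_derivative_compose[OF line] assms by (simp add: o_def)
  ultimately have "((\<lambda>t. f (x + t *\<^sub>R axis k 1)) has_real_derivative f' (axis k 1)) (at 0)"
    by (simp add: has_field_derivative_def)
  then show ?thesis unfolding partial_def by (rule DERIV_imp_deriv)
qed

lemma inner_self_powr:
  fixes x :: "'a::real_inner"
  shows "(x \<bullet> x) powr t = norm x powr (2 * t)"
proof -
  have "x \<bullet> x = norm x powr 2"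
    by (cases "x = 0") (simp_all add: power2_norm_eq_inner[symmetric])
  then have "(x \<bullet> x) powr t = (norm x powr 2) powr t" by (rule arg_cong)
  also have "\<dots> = norm x powr (2 * t)" by (rule powr_powr)
  finally show ?thesis .
qed

lemma has_derivative_inner_self_powr:
  fixes x :: "'a::real_inner"
  assumes "x \<noteq> 0"
  shows "((\<lambda>y. (y \<bullet> y) powr a) has_derivative (\<lambda>v. 2 * a * (x \<bullet> x) powr (a - 1) * (x \<bullet> v))) (at x)"
proof -
  have "x \<bullet> x > 0" using assms by simp
  then show ?thesis
    by (auto intro!: derivative_eq_intros simp: inner_commute powr_diff field_simps)
qed

lemma partial_radial_power:
  fixes x :: "real^'n::finite"
  assumes "x \<noteq> 0"
  shows "partial k (\<lambda>y. c * (y \<bullet> y) powr a) x = 2 * a * c * (x \<bullet> x) powr (a - 1) * x $ k"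
proof -
  have "((\<lambda>y. c * (y \<bullet> y) powr a) has_derivative (\<lambda>v. c * (2 * a * (x \<bullet> x) powr (a - 1) * (x \<bullet> v)))) (at x)"
    by (rule has_derivative_mult_right[OF has_derivative_inner_self_powr[OF assms]])
  from partial_eq_frechet_derivative[OF this] show ?thesis by (simp add: inner_axis)
qed

lemma has_derivative_partial_radial_power:
  fixes x :: "real^'n::finite"
  assumes "x \<noteq> 0"
  shows "(partial k (\<lambda>y. c * (y \<bullet> y) powr a) has_derivative
     (\<lambda>v. 2 * a * c * (2 * (a - 1) * (x \<bullet> x) powr (a - 2) * (x \<bullet> v) * x $ k
        + (x \<bullet> x) powr (a - 1) * v $ k))) (at x)"
proof (rule has_derivative_transform_within_open)
  show "open {y::real^'n. y \<noteq> 0}" by (simp add: open_Collect_neq)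
  show "x \<in> {y. y \<noteq> 0}" using assms by simp
  show "2 * a * c * (y \<bullet> y) powr (a - 1) * y $ k = partial k (\<lambda>y. c * (y \<bullet> y) powr a) y"
    if "y \<in> {y. y \<noteq> 0}" for y
    using that by (intro partial_radial_power[symmetric]) simp
  have "x \<bullet> x > 0" using assms by simp
  then show "((\<lambda>y. 2 * a * c * (y \<bullet> y) powr (a - 1) * y $ k) has_derivative
     (\<lambda>v. 2 * a * c * (2 * (a - 1) * (x \<bullet> x) powr (a - 2) * (x \<bullet> v) * x $ k
        + (x \<bullet> x) powr (a - 1) * v $ k))) (at x)"
    by (auto intro!: derivative_eq_intros bounded_linear.has_derivative[OF bounded_linear_vec_nth] ext
        simp: inner_commute powr_diff field_simps power2_eq_square)
qed

lemma partial2_radial_power: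
  fixes x :: "real^'n::finite"
  assumes "x \<noteq> 0"
  shows "partial i (partial k (\<lambda>y. c * (y \<bullet> y) powr a)) x
    = 2 * a * c * (x \<bullet> x) powr (a - 1)
      * (2 * (a - 1) * x $ i * x $ k / (x \<bullet> x) + (if i = k then 1 else 0))"
proof -
  have "x \<bullet> x > 0" using assms by simp
  then have pow: "(x \<bullet> x) powr (a - 2) = (x \<bullet> x) powr (a - 1) / (x \<bullet> x)"
    using powr_diff[of "x \<bullet> x" "a - 1" 1] by simp
  have "partial i (partial k (\<lambda>y. c * (y \<bullet> y) powr a)) x
      = 2 * a * c * (2 * (a - 1) * (x \<bullet> x) powr (a - 2) * (x \<bullet> axis i 1) * x $ k
        + (x \<bullet> x) powr (a - 1) * axis i 1 $ k)"
    by (rule partial_eq_frechet_derivative[OF has_derivative_partial_radial_power[OF assms]])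
  also have "\<dots> = 2 * a * c * (x \<bullet> x) powr (a - 1)
      * (2 * (a - 1) * x $ i * x $ k / (x \<bullet> x) + (if i = k then 1 else 0))"
  proof -
    have "axis i 1 $ k = (if i = k then 1 else (0::real))" by (simp add: axis_def)
    then show ?thesis
      using \<open>x \<bullet> x > 0\<close> by (simp add: pow inner_axis field_simps)
  qed
  finally show ?thesis .
qed

lemma radial_power_derivatives:
  fixes x :: "real^'n::finite" and c q :: real
  assumes nz: "x \<noteq> 0"
  defines "h \<equiv> 2 * q * c * (x \<bullet> x) powr (- q - 1)"
  shows "partial k (\<lambda>y. c * (y \<bullet> y) powr (- q)) x = - h * x $ k"
    and "partial i (partial k (\<lambda>y. c * (y \<bullet> y) powr (- q))) x
      = h * ((2 * q + 2) * x $ i * x $ k / (x \<bullet> x) - (if i = k then 1 else 0))"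
    and "h * norm x = 2 * q * c * norm x powr (- 2 * q - 1)"
proof -
  show "partial k (\<lambda>y. c * (y \<bullet> y) powr (- q)) x = - h * x $ k"
    using partial_radial_power[OF nz, of k c "- q"] by (simp add: h_def)
  have "x \<bullet> x > 0" using nz by simp
  then show "partial i (partial k (\<lambda>y. c * (y \<bullet> y) powr (- q))) x
      = h * ((2 * q + 2) * x $ i * x $ k / (x \<bullet> x) - (if i = k then 1 else 0))"
    using partial2_radial_power[OF nz, of i k c "- q"] by (simp add: h_def field_simps)
  have "norm x powr (2 * (- q - 1)) * norm x = norm x powr (2 * (- q - 1) + 1)"
    using powr_add[of "norm x" "2 * (- q - 1)" 1] by simp
  also have "2 * (- q - 1) + 1 = - 2 * q - 1" by simp
  finally have "norm x powr (2 * (- q - 1)) * norm x = norm x powr (- 2 * q - 1)" .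
  then show "h * norm x = 2 * q * c * norm x powr (- 2 * q - 1)"
    by (simp add: h_def inner_self_powr mult.assoc)
qed

lemma twice_diff_on_radial_power:
  fixes S :: "(real^'n::finite) set"
  assumes "0 \<notin> S"
  shows "twice_diff_on S (\<lambda>y. c * (y \<bullet> y) powr a)"
  unfolding twice_diff_on_def differentiable_on_def
proof (intro conjI ballI allI)
  fix x assume "x \<in> S"
  then have "x \<noteq> 0" using assms by auto
  show "(\<lambda>y. c * (y \<bullet> y) powr a) differentiable at x within S"
    using has_derivative_mult_right[OF has_derivative_inner_self_powr[OF \<open>x \<noteq> 0\<close>]]
    by (auto intro: differentiableI has_derivative_at_withinI)
  show "partial k (\<lambda>y. c * (y \<bullet> y) powr a) differentiable at x within S" for k
    by (rule differentiableI, rule has_derivative_at_withinI,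
        rule has_derivative_partial_radial_power[OF \<open>x \<noteq> 0\<close>])
qed

lemma perturbation_budget:
  fixes N w a :: real
  assumes "N \<ge> 1" "w \<ge> 0" "40 * N^4 * w \<le> 1" "a \<ge> 0" "8 * N^3 * a \<le> 1"
  shows "2 * N * w + 8 * N^2 * a^2 \<le> 1"
    and "N^2 * ((N + 1/2) * (2 * N * w + 8 * N^2 * a^2) + 6 * N^2 * w) \<le> 1/2"
proof -
  have "(8 * N^3 * a)^2 \<le> 1"
    using assms by (intro power_le_one) auto
  then have a2: "64 * N^6 * a^2 \<le> 1"
    by (simp add: power_mult_distrib flip: power_mult)
  have "N \<le> N^4" "N^3 \<le> N^4" "N^2 \<le> N^6" "N^4 \<le> N^6" "N^5 \<le> N^6"
    using assms(1) power_increasing[of 1 4 N] power_increasing[of 3 4 N]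
      power_increasing[of 2 6 N] power_increasing[of 4 6 N] power_increasing[of 5 6 N]
    by simp_all
  then have "N * w \<le> N^4 * w" "N^3 * w \<le> N^4 * w"
      "N^2 * a^2 \<le> N^6 * a^2" "N^4 * a^2 \<le> N^6 * a^2" "N^5 * a^2 \<le> N^6 * a^2"
    using assms(2) by (simp_all add: mult_right_mono)
  moreover have "N^2 * ((N + 1/2) * (2 * N * w + 8 * N^2 * a^2) + 6 * N^2 * w)
      = 8 * N^4 * w + N^3 * w + 8 * N^5 * a^2 + 4 * N^4 * a^2"
    by (simp add: algebra_simps power_def)
  ultimately show "2 * N * w + 8 * N^2 * a^2 \<le> 1"
    and "N^2 * ((N + 1/2) * (2 * N * w + 8 * N^2 * a^2) + 6 * N^2 * w) \<le> 1/2"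
    using assms(3) a2 by linarith+
qed

lemma static_op_radial_power_nonpos:
  fixes \<sigma> :: "real^'n::finite \<Rightarrow> real^'n^'n" and x :: "real^'n" and c :: real
  defines "N \<equiv> real CARD('n)"
  defines "b \<equiv> \<lambda>y. c * (y \<bullet> y) powr (- ((N - 5/2) / 2))"
  assumes "N \<ge> 3" "x \<noteq> 0" "c > 0"
    and near: "near_euclidean \<sigma> w x" and w: "40 * N^4 * w \<le> 1"
    and grad: "(N - 5/2) * c * norm x powr (3/2 - N) \<le> 1 / (8 * N^3)"
  shows "grad_norm2 \<sigma> b x < 1 \<and> static_op \<sigma> b x \<le> 0"
proof -
  define s where "s = x \<bullet> x"
  define r where "r = norm x"
  define h where "h = 2 * ((N - 5/2) / 2) * c * s powr (- ((N - 5/2) / 2) - 1)"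
  have "s > 0" "r > 0" "h > 0"
    using \<open>N \<ge> 3\<close> \<open>x \<noteq> 0\<close> \<open>c > 0\<close> by (simp_all add: s_def r_def h_def)
  have s_sum: "s = (\<Sum>k\<in>UNIV. (x $ k)^2)"
    by (simp add: s_def inner_vec_def power2_eq_square)
  have "sqrt s = r" "s = r^2"
    by (simp_all add: s_def r_def norm_eq_sqrt_inner power2_norm_eq_inner)
  note derivs = radial_power_derivatives[OF \<open>x \<noteq> 0\<close>, where q = "(N - 5/2) / 2" and c = c,
      folded b_def s_def, folded h_def]
  have "2 * ((N - 5/2) / 2) = N - 5/2" "- 2 * ((N - 5/2) / 2) - 1 = 3/2 - N"
    by (simp_all add: field_simps)
  with derivs(3) have hr: "h * r = (N - 5/2) * c * r powr (3/2 - N)"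
    unfolding r_def by metis
  have "8 * N^3 * (h * r) \<le> 1"
    using hr grad \<open>N \<ge> 3\<close> by (simp add: r_def le_divide_eq mult_ac)
  have "w \<ge> 0" using near unfolding near_euclidean_def by (meson abs_ge_zero order.trans)
  have "N \<ge> 1" "h * r \<ge> 0" using \<open>N \<ge> 3\<close> \<open>h > 0\<close> \<open>r > 0\<close> by simp_all
  note budget = perturbation_budget[OF \<open>N \<ge> 1\<close> \<open>w \<ge> 0\<close> w \<open>h * r \<ge> 0\<close> \<open>8 * N^3 * (h * r) \<le> 1\<close>]
  have budget1: "2 * N * w + 8 * N^2 * (h^2 * s) \<le> 1"
    using budget(1) \<open>s = r^2\<close> by (simp add: power_mult_distrib)
  moreover have "8 * N^2 * (h^2 * s) \<ge> 0" using \<open>s > 0\<close> by simp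
  ultimately have "2 * N * w \<le> 1" by linarith
  have S: "\<bar>inv_metric \<sigma> x i j - (if i = j then 1 else 0)\<bar> \<le> 2 * N * w" for i j
    using near_euclidean_inv_metric[OF near] \<open>2 * N * w \<le> 1\<close> unfolding N_def by blast
  have \<Gamma>: "\<bar>christoffel \<sigma> x k i j\<bar> \<le> 3 * N * w / r" for k i j
    using near_euclidean_christoffel[OF near] \<open>2 * N * w \<le> 1\<close> unfolding N_def r_def by blast
  have "N - 1/2 \<ge> 0" "2 * ((N - 5/2) / 2) + 2 = N - 1/2"
    using \<open>N \<ge> 3\<close> by (simp_all add: field_simps)
  note core = radial_quasilinear_le[where S = "inv_metric \<sigma> x" and \<Gamma> = "christoffel \<sigma> x"
      and x = "\<lambda>k. x $ k" and g = "\<lambda>k. partial k b x" and H = "\<lambda>i j. partial i (partial j b) x",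
      OF s_sum \<open>s > 0\<close> \<open>h > 0\<close> \<open>N - 1/2 \<ge> 0\<close> derivs(1) derivs(2)[unfolded \<open>2 * ((N - 5/2) / 2) + 2 = N - 1/2\<close>],
      folded N_def, OF S \<Gamma> budget1]
  have "grad_norm2 \<sigma> b x < 1"
    unfolding grad_norm2_def by (rule conjunct1[OF core])
  have "static_op \<sigma> b x
      \<le> h * (N - 1/2 - N + N^2 * ((N - 1/2 + 1) * (2 * N * w + 8 * N^2 * (h^2 * s))
             + 2 * N * (3 * N * w / r) * sqrt s))"
    unfolding static_op_def g_inv_def cov_hess_def grad_norm2_def by (rule conjunct2[OF core])
  also have "\<dots> = h * (N^2 * ((N + 1/2) * (2 * N * w + 8 * N^2 * (h * r)^2) + 6 * N^2 * w) - 1/2)"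
    using \<open>sqrt s = r\<close> \<open>s = r^2\<close> \<open>r > 0\<close> by (simp add: power2_eq_square algebra_simps)
  also have "\<dots> \<le> 0"
    using budget(2) \<open>h > 0\<close> by (intro mult_nonneg_nonpos) auto
  finally show ?thesis using \<open>grad_norm2 \<sigma> b x < 1\<close> by simp
qed

lemma barrier_gradient_le:
  fixes N r0 r :: real
  assumes "N \<ge> 3" "0 < r0" "r0 \<le> r"
  shows "(N - 5/2) * (r0 powr (N - 3/2) / (8 * N^4)) * r powr (3/2 - N) \<le> 1 / (8 * N^3)"
proof -
  have "r0 powr (N - 3/2) \<le> r powr (N - 3/2)"
    using assms by (intro powr_mono2) auto
  moreover have "r powr (3/2 - N) = 1 / r powr (N - 3/2)"
    using powr_minus_divide[of r "N - 3/2"] by simp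
  ultimately have ratio: "r0 powr (N - 3/2) * r powr (3/2 - N) \<le> 1"
    using assms by simp
  have "(N - 5/2) * (r0 powr (N - 3/2) / (8 * N^4)) * r powr (3/2 - N)
      = (N - 5/2) / (8 * N^4) * (r0 powr (N - 3/2) * r powr (3/2 - N))"
    by simp
  also have "\<dots> \<le> (N - 5/2) / (8 * N^4)"
    using mult_left_mono[OF ratio, of "(N - 5/2) / (8 * N^4)"] \<open>N \<ge> 3\<close> by simp
  also have "\<dots> \<le> N / (8 * N^4)"
    by (simp add: divide_right_mono)
  also have "\<dots> = 1 / (8 * N^3)"
    using \<open>N \<ge> 3\<close> by (simp add: power_def)
  finally show ?thesis .
qed

definition static_barrier ::
    "(real^'n::finite \<Rightarrow> real^'n^'n) \<Rightarrow> real \<Rightarrow> real \<Rightarrow> (real^'n \<Rightarrow> real) \<Rightarrow> bool" where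
  "static_barrier \<sigma> C r0 b \<longleftrightarrow>
     (\<forall>x y. r0 \<le> norm x \<and> norm x = norm y \<longrightarrow> b x = b y) \<and>
     (\<forall>x. r0 \<le> norm x \<longrightarrow>
        r0 powr (real CARD('n) - 3/2) * norm x powr (- (real CARD('n) - 5/2)) \<le> C * b x \<and>
        b x \<le> C * (r0 powr (real CARD('n) - 3/2) * norm x powr (- (real CARD('n) - 5/2)))) \<and>
     twice_diff_on {x. r0 < norm x} b \<and>
     (\<forall>x. r0 < norm x \<longrightarrow> grad_norm2 \<sigma> b x < 1 \<and> static_op \<sigma> b x \<le> 0)"

lemma near_euclidean_static_barrier:
  fixes \<sigma> :: "real^'n::finite \<Rightarrow> real^'n^'n"
  defines "N \<equiv> real CARD('n)"
  assumes "N \<ge> 3" "1 \<le> r0"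
    and near: "\<And>x. r0 \<le> norm x \<Longrightarrow> near_euclidean \<sigma> (1 / (40 * N^4)) x"
  shows "\<exists>b. static_barrier \<sigma> (8 * N^4) r0 b"
proof -
  define C where "C = 8 * N^4"
  define c where "c = r0 powr (N - 3/2) / C"
  define b where "b = (\<lambda>y::real^'n. c * (y \<bullet> y) powr (- ((N - 5/2) / 2)))"
  have "N^4 \<ge> 1" using \<open>N \<ge> 3\<close> by (simp add: one_le_power)
  then have "C \<ge> 1" by (simp add: C_def)
  have "c > 0" using \<open>1 \<le> r0\<close> \<open>C \<ge> 1\<close> by (simp add: c_def)
  have exponent: "2 * (- ((N - 5/2) / 2)) = - (N - 5/2)" by (simp add: field_simps)
  have b_norm: "b x = c * norm x powr (- (N - 5/2))" for x
    unfolding b_def inner_self_powr exponent ..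
  have bounds: "r0 powr (N - 3/2) * norm x powr (- (N - 5/2)) \<le> C * b x
     \<and> b x \<le> C * (r0 powr (N - 3/2) * norm x powr (- (N - 5/2)))" for x
  proof -
    define T where "T = r0 powr (N - 3/2) * norm x powr (- (N - 5/2))"
    have "T \<ge> 0" by (simp add: T_def)
    have "b x = T / C" by (simp add: b_norm c_def T_def)
    moreover have "T / C \<le> T" "T \<le> C * T"
      using \<open>C \<ge> 1\<close> \<open>T \<ge> 0\<close> mult_left_mono[of 1 C T] by (simp_all add: divide_le_eq mult.commute)
    ultimately show ?thesis
      using \<open>C \<ge> 1\<close> unfolding T_def by simp
  qed
  have static: "grad_norm2 \<sigma> b x < 1 \<and> static_op \<sigma> b x \<le> 0" if "r0 < norm x" for x
  proof -
    have "x \<noteq> 0" using that \<open>1 \<le> r0\<close> by auto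
    have grad: "(N - 5/2) * c * norm x powr (3/2 - N) \<le> 1 / (8 * N^3)"
      unfolding c_def C_def using barrier_gradient_le \<open>N \<ge> 3\<close> \<open>1 \<le> r0\<close> that by simp
    have "40 * N^4 * (1 / (40 * N^4)) \<le> 1" using \<open>N \<ge> 3\<close> by simp
    then show ?thesis
      using \<open>N \<ge> 3\<close> \<open>x \<noteq> 0\<close> \<open>c > 0\<close> near[of x] that grad
      unfolding b_def N_def by (intro static_op_radial_power_nonpos) auto
  qed
  have "twice_diff_on {x. r0 < norm x} b"
    unfolding b_def using \<open>1 \<le> r0\<close> by (intro twice_diff_on_radial_power) auto
  moreover have "\<forall>x y. r0 \<le> norm x \<and> norm x = norm y \<longrightarrow> b x = b y"
    by (simp add: b_norm)
  ultimately show ?thesis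
    unfolding static_barrier_def C_def[symmetric] N_def[symmetric] using bounds static by blast
qed

theorem lemma3p1:
  assumes "CARD('n::finite) \<ge> 3"
  shows "\<exists>C>0. \<forall>(\<sigma> :: real^'n \<Rightarrow> real^'n^'n) R0.
    riemannian_exterior \<sigma> R0 \<and> asymp_flat \<sigma> \<longrightarrow>
    (\<exists>r1>0. \<forall>r0\<ge>r1. \<exists>b :: real^'n \<Rightarrow> real.
       (\<forall>x y. r0 \<le> norm x \<and> norm x = norm y \<longrightarrow> b x = b y) \<and>
       (\<forall>x. r0 \<le> norm x \<longrightarrow>
          r0 powr (real CARD('n) - 3/2) * norm x powr (- (real CARD('n) - 5/2)) \<le> C * b x \<and>
          b x \<le> C * (r0 powr (real CARD('n) - 3/2) * norm x powr (- (real CARD('n) - 5/2)))) \<and>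
       twice_diff_on {x. r0 < norm x} b \<and>
       (\<forall>x. r0 < norm x \<longrightarrow> grad_norm2 \<sigma> b x < 1 \<and> static_op \<sigma> b x \<le> 0))"
proof -
  define N where "N = real CARD('n)"
  have "N \<ge> 3" using assms by (simp add: N_def)
  have "\<exists>r1>0. \<forall>r0\<ge>r1. \<exists>b. static_barrier \<sigma> (8 * N^4) r0 b"
    if flat: "riemannian_exterior \<sigma> R0 \<and> asymp_flat \<sigma>" for \<sigma> :: "real^'n \<Rightarrow> real^'n^'n" and R0
  proof -
    obtain r1 where "r1 \<ge> 1" and near: "\<forall>x. r1 \<le> norm x \<longrightarrow> near_euclidean \<sigma> (1 / (40 * N^4)) x"
      using asymp_flat_near_euclidean[of \<sigma> R0 "1 / (40 * N^4)"] flat \<open>N \<ge> 3\<close> by auto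
    have "\<exists>b. static_barrier \<sigma> (8 * N^4) r0 b" if "r1 \<le> r0" for r0
      unfolding N_def
      by (rule near_euclidean_static_barrier) (use \<open>N \<ge> 3\<close> \<open>r1 \<ge> 1\<close> near that in \<open>auto simp: N_def\<close>)
    then show ?thesis using \<open>r1 \<ge> 1\<close> by (intro exI[of _ r1]) auto
  qed
  moreover have "8 * N^4 > 0" using \<open>N \<ge> 3\<close> by simp
  ultimately show ?thesis
    unfolding static_barrier_def N_def by blast
qed

end
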